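(* Let $\Sigma$ be a ranked alphabet, $B$ a strong bimonoid, $\mathcal{A}=(Q,\delta,F)$ a $(\Sigma,B)$-wta and $\xi=\sigma(\xi_1,\dots,\xi_k)\in T_\Sigma$. Then: (i)(a) if $h^{\neq\mathbb{0}}_{\mathrm{V}(\mathcal{A})}(\xi_i)=\emptyset$ for some $i\in[k]$, then $h^{\neq\mathbb{0}}_{\mathrm{V}(\mathcal{A})}(\xi)=\emptyset$; (b) if $R^{\neq\mathbb{0}}_{\mathcal{A}}(\xi_i)=\emptyset$ for some $i\in[k]$, then $R^{\neq\mathbb{0}}_{\mathcal{A}}(\xi)=\emptyset$. Moreover, if $\mathcal{A}$ is bottom-up deterministic, then also: (ii) (a) $|h^{\neq\mathbb{0}}_{\mathrm{V}(\mathcal{A})}(\xi)|\le 1$ and (b) $|R^{\neq\mathbb{0}}_{\mathcal{A}}(\xi)|\le 1$; (iii) either (a) $h^{\neq\mathbb{0}}_{\mathrm{V}(\mathcal{A})}(\xi)=\emptyset=R^{\neq\mathbb{0}}_{\mathcal{A}}(\xi)$, or (b) there is $q\in Q$ with $h^{\neq\mathbb{0}}_{\mathrm{V}(\mathcal{A})}(\xi)=\{q\}=R^{\neq\mathbb{0}}_{\mathcal{A}}(\xi)$, and there is exactly one $\rho\in R_{\mathcal{A}}(q,\xi)$ with $\mathrm{wt}_{\mathcal{A}}(\rho)\neq\mathbb{0}$, and for it $h_{\mathrm{V}(\mathcal{A})}(\xi)_q=\mathrm{wt}_{\mathcal{A}}(\rho)$.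
   Context: Ranked alphabet $\Sigma$ (finite, with ranks; $\Sigma^{(k)}$ the symbols of rank $k$; $\Sigma^{(0)}\neq\emptyset$), trees $T_\Sigma$, positions $\mathrm{pos}(\xi)$ ($\mathrm{pos}(\sigma(\xi_1,\dots,\xi_k))=\{\varepsilon\}\cup\{iv\mid i\in[k],v\in\mathrm{pos}(\xi_i)\}$). A strong bimonoid $(B,\oplus,\otimes,\mathbb{0},\mathbb{1})$: $(B,\oplus,\mathbb{0})$ commutative monoid, $(B,\otimes,\mathbb{1})$ monoid, $\mathbb{0}\ne\mathbb{1}$, $\mathbb{0}$ multiplicatively absorbing; no distributivity. $\bigotimes_{i=1}^k a_i=a_1\otimes\cdots\otimes a_k$ ($\mathbb{1}$ if $k=0$). A $(\Sigma,B)$-wta is $\mathcal{A}=(Q,\delta,F)$, $Q$ finite nonempty, $\delta_k:Q^k\times\Sigma^{(k)}\times Q\to B$, $F:Q\to B$. $h_{\mathrm{V}(\mathcal{A})}:T_\Sigma\to B^Q$ is defined recursively by $h_{\mathrm{V}(\mathcal{A})}(\sigma(\xi_1,\dots,\xi_k))_q=\bigoplus_{q_1,\dots,q_k\in Q}\big(\bigotimes_{i=1}^k h_{\mathrm{V}(\mathcal{A})}(\xi_i)_{q_i}\big)\otimes\delta_k(q_1\dots q_k,\sigma,q)$. A run on $\xi$ is a map $\rho:\mathrm{pos}(\xi)\to Q$; it is a $q$-run if $\rho(\varepsilon)=q$; $R_{\mathcal{A}}(q,\xi)$ is the set of $q$-runs; $\rho|_i(w)=\rho(iw)$; $\mathrm{wt}_{\mathcal{A}}(\rho)=\big(\bigotimes_{i=1}^k\mathrm{wt}_{\mathcal{A}}(\rho|_i)\big)\otimes\delta_k(\rho(1)\dots\rho(k),\sigma,\rho(\varepsilon))$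 for $\xi=\sigma(\xi_1,\dots,\xi_k)$. $h^{\neq\mathbb{0}}_{\mathrm{V}(\mathcal{A})}(\xi)=\{q\in Q\mid h_{\mathrm{V}(\mathcal{A})}(\xi)_q\neq\mathbb{0}\}$ and $R^{\neq\mathbb{0}}_{\mathcal{A}}(\xi)=\{q\in Q\mid \exists\rho\in R_{\mathcal{A}}(q,\xi):\mathrm{wt}_{\mathcal{A}}(\rho)\neq\mathbb{0}\}$. $\mathcal{A}$ is bottom-up deterministic if for all $k,\sigma\in\Sigma^{(k)},q_1,\dots,q_k$ there is at most one $q$ with $\delta_k(q_1\dots q_k,\sigma,q)\ne\mathbb{0}$. *)

theory Defs
  imports Main
begin

datatype 'f tree = Node 'f "'f tree list"

definition ranked_alphabet :: "'f set \<Rightarrow> ('f \<Rightarrow> nat) \<Rightarrow> bool" where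
  "ranked_alphabet Sig rk \<longleftrightarrow> finite Sig \<and> (\<exists>s\<in>Sig. rk s = 0)"

fun wf_tree :: "'f set \<Rightarrow> ('f \<Rightarrow> nat) \<Rightarrow> 'f tree \<Rightarrow> bool" where
  "wf_tree Sig rk (Node s ts) \<longleftrightarrow> s \<in> Sig \<and> length ts = rk s \<and> (\<forall>t\<in>set ts. wf_tree Sig rk t)"

definition strong_bimonoid ::
  "('b \<Rightarrow> 'b \<Rightarrow> 'b) \<Rightarrow> ('b \<Rightarrow> 'b \<Rightarrow> 'b) \<Rightarrow> 'b \<Rightarrow> 'b \<Rightarrow> bool" where
  "strong_bimonoid add mult zero one \<longleftrightarrow>
     (\<forall>a b c. add (add a b) c = add a (add b c)) \<and>
     (\<forall>a b. add a b = add b a) \<and>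
     (\<forall>a. add zero a = a) \<and>
     (\<forall>a b c. mult (mult a b) c = mult a (mult b c)) \<and>
     (\<forall>a. mult one a = a \<and> mult a one = a) \<and>
     zero \<noteq> one \<and>
     (\<forall>a. mult zero a = zero \<and> mult a zero = zero)"

definition bsum :: "('b \<Rightarrow> 'b \<Rightarrow> 'b) \<Rightarrow> 'b \<Rightarrow> ('a \<Rightarrow> 'b) \<Rightarrow> 'a set \<Rightarrow> 'b" where
  "bsum add zero g A = comm_monoid_set.F add zero g A"

definition bprod :: "('b \<Rightarrow> 'b \<Rightarrow> 'b) \<Rightarrow> 'b \<Rightarrow> 'b list \<Rightarrow> 'b" where
  "bprod mult one xs = foldr mult xs one"

definition tuples :: "'q set \<Rightarrow> nat \<Rightarrow> 'q list set" where
  "tuples Q k = {qs. length qs = k \<and> set qs \<subseteq> Q}"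

(* h_{V(A)}(xi)_q ; delta qs s q stands for delta_k(q_1...q_k, s, q) *)
fun hV :: "('b \<Rightarrow> 'b \<Rightarrow> 'b) \<Rightarrow> ('b \<Rightarrow> 'b \<Rightarrow> 'b) \<Rightarrow> 'b \<Rightarrow> 'b \<Rightarrow> 'q set
           \<Rightarrow> ('q list \<Rightarrow> 'f \<Rightarrow> 'q \<Rightarrow> 'b) \<Rightarrow> 'f tree \<Rightarrow> 'q \<Rightarrow> 'b" where
  "hV add mult zero one Q delta (Node s ts) q =
     (let vs = map (hV add mult zero one Q delta) ts in
      bsum add zero
        (\<lambda>qs. mult (bprod mult one (map (\<lambda>(v, qi). v qi) (zip vs qs))) (delta qs s q))
        (tuples Q (length ts)))"

definition hV_nz where
  "hV_nz add mult zero one Q delta xi = {q \<in> Q. hV add mult zero one Q delta xi q \<noteq> zero}"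

lemma size_in_set_less: "b \<in> set ts \<Longrightarrow> size b < Suc (size_list size ts)"
  by (induction ts) auto

(* positions; child indices are 0-based here (paper: 1-based) *)
function pos :: "'f tree \<Rightarrow> nat list set" where
  "pos (Node s ts) = {[]} \<union>
     (\<Union>(i, t) \<in> set (zip [0..<length ts] ts). (\<lambda>v. i # v) ` pos t)"
  by pat_completeness auto
termination
  by (relation "measure size") (auto dest!: set_zip_rightD simp: size_in_set_less)

definition runs :: "'q set \<Rightarrow> 'q \<Rightarrow> 'f tree \<Rightarrow> (nat list \<Rightarrow> 'q option) set" where
  "runs Q q xi = {rho. dom rho = pos xi \<and> ran rho \<subseteq> Q \<and> rho [] = Some q}"

function wt :: "('b \<Rightarrow> 'b \<Rightarrow> 'b) \<Rightarrow> ('b \<Rightarrow> 'b \<Rightarrow> 'b) \<Rightarrow> 'b \<Rightarrow> 'b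
           \<Rightarrow> ('q list \<Rightarrow> 'f \<Rightarrow> 'q \<Rightarrow> 'b) \<Rightarrow> 'f tree \<Rightarrow> (nat list \<Rightarrow> 'q option) \<Rightarrow> 'b" where
  "wt add mult zero one delta (Node s ts) rho =
     mult (bprod mult one (map (\<lambda>(i, t). wt add mult zero one delta t (\<lambda>w. rho (i # w)))
                              (zip [0..<length ts] ts)))
          (delta (map (\<lambda>i. the (rho [i])) [0..<length ts]) s (the (rho [])))"
  by pat_completeness auto
termination
  by (relation "measure (\<lambda>(_,_,_,_,_,t,_). size t)")
     (auto dest!: set_zip_rightD simp: size_in_set_less)

definition R_nz where
  "R_nz add mult zero one Q delta xi =
     {q \<in> Q. \<exists>rho \<in> runs Q q xi. wt add mult zero one delta xi rho \<noteq> zero}"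

definition bu_deterministic ::
  "'f set \<Rightarrow> ('f \<Rightarrow> nat) \<Rightarrow> 'b \<Rightarrow> 'q set \<Rightarrow> ('q list \<Rightarrow> 'f \<Rightarrow> 'q \<Rightarrow> 'b) \<Rightarrow> bool" where
  "bu_deterministic Sig rk zero Q delta \<longleftrightarrow>
     (\<forall>s\<in>Sig. \<forall>qs\<in>tuples Q (rk s). \<forall>p\<in>Q. \<forall>q\<in>Q.
        delta qs s p \<noteq> zero \<longrightarrow> delta qs s q \<noteq> zero \<longrightarrow> p = q)"

end

theory Submission
  imports Defs
begin

(* Part (i) is absorption by zero: a child value h(xi_i) that vanishes in every state kills every
   summand of h(xi)_q, and a zero-weight subrun kills the weight of the whole run.

   For (ii) and (iii), bottom-up determinism makes a run of nonzero weight unique, even across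
   root states: by induction the subruns agree, hence so does the tuple of child states, and
   determinism then fixes the root state. Since B is not distributive, h(xi)_q cannot be expanded
   into a sum over runs. Instead, by induction, in the sum defining h(xi)_q every tuple of child
   states other than the one read off the unique nonzero run contains a state with value zero, so
   exactly one summand survives, and it equals the weight of that run. *)

lemma pos_Node: "pos (Node s ts) = insert [] {i # v | i v. i < length ts \<and> v \<in> pos (ts ! i)}"
  by (auto simp: set_zip)

lemma Nil_in_pos: "[] \<in> pos t"
  by (cases t) simp

lemma runs_root: "\<rho> \<in> runs Q q t \<Longrightarrow> \<rho> [] = Some q"
  by (simp add: runs_def)

lemma runs_root_unique: "\<rho> \<in> runs Q p t \<Longrightarrow> \<rho> \<in> runs Q q t \<Longrightarrow> p = q"
  by (simp add: runs_def)

lemma runs_root_in: "\<rho> \<in> runs Q q t \<Longrightarrow> q \<in> Q"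
  by (auto simp: runs_def ran_def)

lemma runs_child:
  assumes "\<rho> \<in> runs Q q (Node s ts)" "i < length ts"
  shows "(\<lambda>w. \<rho> (i # w)) \<in> runs Q (the (\<rho> [i])) (ts ! i)"
proof -
  have dom: "dom \<rho> = pos (Node s ts)" and ran: "ran \<rho> \<subseteq> Q"
    using assms(1) by (auto simp: runs_def)
  have "dom (\<lambda>w. \<rho> (i # w)) = pos (ts ! i)"
    using dom assms(2) unfolding pos_Node by (auto simp: dom_def)
  moreover have "ran (\<lambda>w. \<rho> (i # w)) \<subseteq> Q"
    using ran by (auto simp: ran_def)
  moreover have "\<rho> [i] \<noteq> None"
    using dom assms(2) Nil_in_pos[of "ts ! i"] unfolding pos_Node by (auto simp: dom_def)
  ultimately show ?thesis by (auto simp: runs_def)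
qed

lemma runs_Node_eqI:
  assumes "\<rho>\<^sub>1 \<in> runs Q q (Node s ts)" "\<rho>\<^sub>2 \<in> runs Q q (Node s ts)"
    and "\<And>i. i < length ts \<Longrightarrow> (\<lambda>w. \<rho>\<^sub>1 (i # w)) = (\<lambda>w. \<rho>\<^sub>2 (i # w))"
  shows "\<rho>\<^sub>1 = \<rho>\<^sub>2"
proof
  fix w
  show "\<rho>\<^sub>1 w = \<rho>\<^sub>2 w"
  proof (cases w)
    case Nil
    then show ?thesis using assms(1,2) by (simp add: runs_root)
  next
    case (Cons i v)
    show ?thesis
    proof (cases "i < length ts")
      case True
      then show ?thesis using fun_cong[OF assms(3)[OF True], of v] Cons by simp
    next
      case False
      then have "w \<notin> dom \<rho>\<^sub>1" "w \<notin> dom \<rho>\<^sub>2"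
        using assms(1,2) Cons unfolding runs_def pos_Node by auto
      then show ?thesis by (simp add: domIff)
    qed
  qed
qed

lemma finite_tuples: "finite Q \<Longrightarrow> finite (tuples Q n)"
  by (rule finite_subset[OF _ finite_lists_length_eq[of Q n]]) (auto simp: tuples_def)

lemma bu_deterministicD:
  assumes "bu_deterministic Sig rk zero Q delta"
    and "s \<in> Sig" "qs \<in> tuples Q (rk s)" "p \<in> Q" "q \<in> Q"
    and "delta qs s p \<noteq> zero" "delta qs s q \<noteq> zero"
  shows "p = q"
  using assms unfolding bu_deterministic_def by blast

fun run_Node :: "'q \<Rightarrow> (nat \<Rightarrow> nat list \<Rightarrow> 'q option) \<Rightarrow> nat \<Rightarrow> nat list \<Rightarrow> 'q option" where
  "run_Node q rs n [] = Some q"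
| "run_Node q rs n (i # v) = (if i < n then rs i v else None)"

lemma run_Node_in_runs:
  assumes "q \<in> Q" "\<And>i. i < length ts \<Longrightarrow> rs i \<in> runs Q (qs ! i) (ts ! i)"
  shows "run_Node q rs (length ts) \<in> runs Q q (Node s ts)"
proof -
  have "dom (run_Node q rs (length ts)) = pos (Node s ts)"
  proof (rule set_eqI)
    fix w
    show "w \<in> dom (run_Node q rs (length ts)) \<longleftrightarrow> w \<in> pos (Node s ts)"
      using assms(2) unfolding pos_Node by (cases w) (auto simp: runs_def dom_def)
  qed
  moreover have "ran (run_Node q rs (length ts)) \<subseteq> Q"
  proof
    fix p
    assume "p \<in> ran (run_Node q rs (length ts))"
    then obtain w where "run_Node q rs (length ts) w = Some p"
      by (auto simp: ran_def)
    then show "p \<in> Q"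
      using assms by (cases w) (auto simp: runs_def ran_def split: if_splits)
  qed
  ultimately show ?thesis by (simp add: runs_def)
qed

locale strong_bimonoid_ops =
  fixes add mult :: "'b \<Rightarrow> 'b \<Rightarrow> 'b" and zero one :: 'b
  assumes strong_bimonoid: "strong_bimonoid add mult zero one"
begin

lemma mult_zero_left: "mult zero a = zero" and mult_zero_right: "mult a zero = zero"
  using strong_bimonoid by (auto simp: strong_bimonoid_def)

sublocale bsum: comm_monoid_set add zero
  rewrites "comm_monoid_set.F add zero = bsum add zero"
proof -
  show "comm_monoid_set add zero"
    using strong_bimonoid unfolding strong_bimonoid_def comm_monoid_set_def
    by unfold_locales metis+
  then show "comm_monoid_set.F add zero = bsum add zero"
    by (intro ext) (simp add: bsum_def)
qed

lemma bprod_eq_zero: "zero \<in> set xs \<Longrightarrow> bprod mult one xs = zero"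
  by (induction xs) (auto simp: bprod_def mult_zero_left mult_zero_right)

lemma bprod_upt_eq_zero: "i < n \<Longrightarrow> f i = zero \<Longrightarrow> bprod mult one (map f [0..<n]) = zero"
  by (rule bprod_eq_zero) force

end

locale wta = strong_bimonoid_ops add mult zero one
  for add mult :: "'b \<Rightarrow> 'b \<Rightarrow> 'b" and zero one :: 'b +
  fixes Q :: "'q set" and delta :: "'q list \<Rightarrow> 'f \<Rightarrow> 'q \<Rightarrow> 'b"
begin

abbreviation hv :: "'f tree \<Rightarrow> 'q \<Rightarrow> 'b" where
  "hv \<equiv> hV add mult zero one Q delta"

abbreviation weight :: "'f tree \<Rightarrow> (nat list \<Rightarrow> 'q option) \<Rightarrow> 'b" where
  "weight \<equiv> wt add mult zero one delta"

lemma hv_Node: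
  "hv (Node s ts) q =
     bsum add zero (\<lambda>qs. mult (bprod mult one (map (\<lambda>i. hv (ts ! i) (qs ! i)) [0..<length ts]))
                              (delta qs s q))
       (tuples Q (length ts))"
proof -
  have "map (\<lambda>(v, p). v p) (zip (map hv ts) qs)
      = map (\<lambda>i. hv (ts ! i) (qs ! i)) [0..<length ts]"
    if "qs \<in> tuples Q (length ts)" for qs
    using that by (intro nth_equalityI) (auto simp: tuples_def)
  then show ?thesis
    by (auto simp: Let_def intro: bsum.cong)
qed

lemma weight_Node:
  "weight (Node s ts) \<rho> =
     mult (bprod mult one (map (\<lambda>i. weight (ts ! i) (\<lambda>w. \<rho> (i # w))) [0..<length ts]))
          (delta (map (\<lambda>i. the (\<rho> [i])) [0..<length ts]) s (the (\<rho> [])))"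
proof -
  have "map (\<lambda>(i, t). weight t (\<lambda>w. \<rho> (i # w))) (zip [0..<length ts] ts)
      = map (\<lambda>i. weight (ts ! i) (\<lambda>w. \<rho> (i # w))) [0..<length ts]"
    by (intro nth_equalityI) auto
  then show ?thesis by simp
qed

declare hV.simps [simp del] wt.simps [simp del]

lemma weight_Node_nonzeroD:
  assumes "weight (Node s ts) \<rho> \<noteq> zero"
  shows "\<And>i. i < length ts \<Longrightarrow> weight (ts ! i) (\<lambda>w. \<rho> (i # w)) \<noteq> zero"
    and "delta (map (\<lambda>i. the (\<rho> [i])) [0..<length ts]) s (the (\<rho> [])) \<noteq> zero"
proof -
  show "weight (ts ! i) (\<lambda>w. \<rho> (i # w)) \<noteq> zero" if "i < length ts" for i
    using assms bprod_upt_eq_zero[OF that] by (auto simp: weight_Node mult_zero_left)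
  show "delta (map (\<lambda>i. the (\<rho> [i])) [0..<length ts]) s (the (\<rho> [])) \<noteq> zero"
  proof
    assume "delta (map (\<lambda>i. the (\<rho> [i])) [0..<length ts]) s (the (\<rho> [])) = zero"
    then have "weight (Node s ts) \<rho> = zero"
      by (simp only: weight_Node mult_zero_right)
    with assms show False ..
  qed
qed

lemma weight_run_Node:
  assumes "\<And>i. i < length ts \<Longrightarrow> rs i \<in> runs Q (qs ! i) (ts ! i)" "length qs = length ts"
  shows "weight (Node s ts) (run_Node q rs (length ts)) =
           mult (bprod mult one (map (\<lambda>i. weight (ts ! i) (rs i)) [0..<length ts])) (delta qs s q)"
proof -
  have "map (\<lambda>i. the (run_Node q rs (length ts) [i])) [0..<length ts] = qs"
    using runs_root[OF assms(1)] assms(2) by (intro nth_equalityI) auto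
  moreover have "map (\<lambda>i. weight (ts ! i) (\<lambda>w. run_Node q rs (length ts) (i # w))) [0..<length ts]
      = map (\<lambda>i. weight (ts ! i) (rs i)) [0..<length ts]"
    by (intro map_cong) auto
  ultimately show ?thesis
    by (simp only: weight_Node) simp
qed

lemma hv_Node_eq_zero:
  assumes "i < length ts" "\<forall>p\<in>Q. hv (ts ! i) p = zero"
  shows "hv (Node s ts) q = zero"
  unfolding hv_Node
proof (rule bsum.neutral, intro ballI)
  fix qs
  assume "qs \<in> tuples Q (length ts)"
  then have "qs ! i \<in> Q"
    using assms(1) by (auto simp: tuples_def)
  with assms(2) have "hv (ts ! i) (qs ! i) = zero"
    by blast
  then show "mult (bprod mult one (map (\<lambda>i. hv (ts ! i) (qs ! i)) [0..<length ts]))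
      (delta qs s q) = zero"
    by (simp add: bprod_upt_eq_zero[OF assms(1)] mult_zero_left)
qed

lemma weight_Node_eq_zero:
  assumes "i < length ts" "\<forall>p\<in>Q. \<forall>r\<in>runs Q p (ts ! i). weight (ts ! i) r = zero"
    and "\<rho> \<in> runs Q q (Node s ts)"
  shows "weight (Node s ts) \<rho> = zero"
  using weight_Node_nonzeroD(1)[OF _ assms(1)] runs_child[OF assms(3,1)]
    runs_root_in[OF runs_child[OF assms(3,1)]] assms(2)
  by blast

lemma hV_nz_Node_eq_empty:
  assumes "i < length ts" "hV_nz add mult zero one Q delta (ts ! i) = {}"
  shows "hV_nz add mult zero one Q delta (Node s ts) = {}"
  using hv_Node_eq_zero[OF assms(1)] assms(2) unfolding hV_nz_def by blast

lemma R_nz_Node_eq_empty: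
  assumes "i < length ts" "R_nz add mult zero one Q delta (ts ! i) = {}"
  shows "R_nz add mult zero one Q delta (Node s ts) = {}"
  using weight_Node_eq_zero[OF assms(1)] assms(2) unfolding R_nz_def by blast

lemma hv_Node_eq_single_summand:
  assumes "finite Q" "qs \<in> tuples Q (length ts)"
    and "\<And>i p. i < length ts \<Longrightarrow> p \<in> Q \<Longrightarrow> hv (ts ! i) p \<noteq> zero \<Longrightarrow> p = qs ! i"
  shows "hv (Node s ts) q =
           mult (bprod mult one (map (\<lambda>i. hv (ts ! i) (qs ! i)) [0..<length ts])) (delta qs s q)"
proof -
  have "finite (tuples Q (length ts))"
    using assms(1) by (rule finite_tuples)
  moreover have "bprod mult one (map (\<lambda>i. hv (ts ! i) (qs' ! i)) [0..<length ts]) = zero"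
    if "qs' \<in> tuples Q (length ts) - {qs}" for qs'
  proof -
    have "qs' \<noteq> qs" "length qs' = length ts" "length qs = length ts"
      using that assms(2) by (auto simp: tuples_def)
    then obtain i where "i < length ts" "qs' ! i \<noteq> qs ! i"
      by (metis nth_equalityI)
    moreover have "qs' ! i \<in> Q"
      using that \<open>i < length ts\<close> by (auto simp: tuples_def)
    ultimately show ?thesis
      using assms(3) by (force intro: bprod_eq_zero)
  qed
  ultimately show ?thesis
    unfolding hv_Node using assms(2)
    by (subst bsum.mono_neutral_right[where S = "{qs}"]) (auto simp: mult_zero_left)
qed

lemma nonzero_runs_unique:
  assumes "bu_deterministic Sig rk zero Q delta" "wf_tree Sig rk t"
    and "\<rho>\<^sub>1 \<in> runs Q p\<^sub>1 t" "weight t \<rho>\<^sub>1 \<noteq> zero"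
    and "\<rho>\<^sub>2 \<in> runs Q p\<^sub>2 t" "weight t \<rho>\<^sub>2 \<noteq> zero"
  shows "\<rho>\<^sub>1 = \<rho>\<^sub>2"
  using assms(2-)
proof (induction t arbitrary: \<rho>\<^sub>1 \<rho>\<^sub>2 p\<^sub>1 p\<^sub>2)
  case (Node s ts)
  let ?states = "\<lambda>\<rho>. map (\<lambda>i. the (\<rho> [i])) [0..<length ts]"
  have children: "(\<lambda>w. \<rho>\<^sub>1 (i # w)) = (\<lambda>w. \<rho>\<^sub>2 (i # w))" if "i < length ts" for i
    using Node.prems(1) that
    by (intro Node.IH[OF nth_mem[OF that] _
          runs_child[OF Node.prems(2) that] weight_Node_nonzeroD(1)[OF Node.prems(3) that]
          runs_child[OF Node.prems(4) that] weight_Node_nonzeroD(1)[OF Node.prems(5) that]]) simp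
  then have "\<rho>\<^sub>1 [i] = \<rho>\<^sub>2 [i]" if "i < length ts" for i
    using fun_cong[OF children[OF that], of "[]"] by simp
  then have states: "?states \<rho>\<^sub>1 = ?states \<rho>\<^sub>2"
    by (intro map_cong) auto
  have "s \<in> Sig" and tuple: "?states \<rho>\<^sub>1 \<in> tuples Q (rk s)"
    using Node.prems(1,2) runs_root_in[OF runs_child[OF Node.prems(2)]] by (auto simp: tuples_def)
  have "delta (?states \<rho>\<^sub>1) s p\<^sub>1 \<noteq> zero" and delta\<^sub>2: "delta (?states \<rho>\<^sub>2) s p\<^sub>2 \<noteq> zero"
    using weight_Node_nonzeroD(2)[OF Node.prems(3)] weight_Node_nonzeroD(2)[OF Node.prems(5)]
      runs_root[OF Node.prems(2)] runs_root[OF Node.prems(4)] by simp_all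
  with \<open>s \<in> Sig\<close> tuple have "p\<^sub>1 = p\<^sub>2"
    by (intro bu_deterministicD[OF assms(1) _ _ runs_root_in[OF Node.prems(2)]
          runs_root_in[OF Node.prems(4)] _ delta\<^sub>2[folded states]])
  then show "\<rho>\<^sub>1 = \<rho>\<^sub>2"
    using Node.prems(2,4) by (intro runs_Node_eqI[OF _ _ children]) simp_all
qed

lemma run_of_hv_nonzero:
  assumes "finite Q" "bu_deterministic Sig rk zero Q delta" "wf_tree Sig rk t"
    and "q \<in> Q" "hv t q \<noteq> zero"
  shows "\<exists>\<rho>\<in>runs Q q t. weight t \<rho> = hv t q"
  using assms(3-)
proof (induction t arbitrary: q)
  case (Node s ts)
  have wf: "wf_tree Sig rk (ts ! i)" if "i < length ts" for i
    using Node.prems(1) that by simp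
  obtain qs where qs: "qs \<in> tuples Q (length ts)"
    and summand: "mult (bprod mult one (map (\<lambda>i. hv (ts ! i) (qs ! i)) [0..<length ts]))
                       (delta qs s q) \<noteq> zero"
    using Node.prems(3) unfolding hv_Node by (rule bsum.not_neutral_contains_not_neutral)
  have qs_in: "qs ! i \<in> Q" if "i < length ts" for i
    using qs that by (auto simp: tuples_def)
  have hv_qs: "hv (ts ! i) (qs ! i) \<noteq> zero" if "i < length ts" for i
    using summand bprod_upt_eq_zero[OF that] by (auto simp: mult_zero_left)
  have "\<exists>r \<in> runs Q (qs ! i) (ts ! i). weight (ts ! i) r = hv (ts ! i) (qs ! i)"
    if "i < length ts" for i
    using Node.IH[OF nth_mem wf qs_in hv_qs] that by blast
  then obtain rs where rs: "\<And>i. i < length ts \<Longrightarrow> rs i \<in> runs Q (qs ! i) (ts ! i)"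
    and weight_rs: "\<And>i. i < length ts \<Longrightarrow> weight (ts ! i) (rs i) = hv (ts ! i) (qs ! i)"
    by metis
  have "p = qs ! i" if i: "i < length ts" and p: "p \<in> Q" "hv (ts ! i) p \<noteq> zero" for i p
  proof -
    obtain r where "r \<in> runs Q p (ts ! i)" "weight (ts ! i) r = hv (ts ! i) p"
      using Node.IH[OF nth_mem[OF i] wf[OF i] p] by blast
    then have "r = rs i"
      using nonzero_runs_unique[OF assms(2) wf[OF i] _ _ rs[OF i]] weight_rs[OF i] hv_qs[OF i]
        p(2) by simp
    with rs[OF i] have "r \<in> runs Q (qs ! i) (ts ! i)"
      by simp
    with \<open>r \<in> runs Q p (ts ! i)\<close> show ?thesis
      by (rule runs_root_unique)
  qed
  then have "hv (Node s ts) q =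
      mult (bprod mult one (map (\<lambda>i. hv (ts ! i) (qs ! i)) [0..<length ts])) (delta qs s q)"
    by (rule hv_Node_eq_single_summand[OF assms(1) qs])
  also have "map (\<lambda>i. hv (ts ! i) (qs ! i)) [0..<length ts]
      = map (\<lambda>i. weight (ts ! i) (rs i)) [0..<length ts]"
    using weight_rs by simp
  also have "mult (bprod mult one \<dots>) (delta qs s q)
      = weight (Node s ts) (run_Node q rs (length ts))"
    using weight_run_Node[OF rs] qs by (simp add: tuples_def)
  finally show ?case
    using run_Node_in_runs[OF Node.prems(2) rs] by metis
qed

lemma hv_nonzero_imp_eq_root:
  assumes "finite Q" "bu_deterministic Sig rk zero Q delta" "wf_tree Sig rk t"
    and "\<rho> \<in> runs Q q t" "weight t \<rho> \<noteq> zero" "p \<in> Q" "hv t p \<noteq> zero"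
  shows "p = q"
proof -
  obtain r where r: "r \<in> runs Q p t" "weight t r = hv t p"
    using run_of_hv_nonzero[OF assms(1-3,6,7)] by blast
  with assms(7) have "r = \<rho>"
    using nonzero_runs_unique[OF assms(2,3) _ _ assms(4,5)] by simp
  with r(1) have "\<rho> \<in> runs Q p t"
    by simp
  from this assms(4) show ?thesis
    by (rule runs_root_unique)
qed

lemma hv_eq_weight:
  assumes "finite Q" "bu_deterministic Sig rk zero Q delta" "wf_tree Sig rk t"
    and "\<rho> \<in> runs Q q t" "weight t \<rho> \<noteq> zero"
  shows "hv t q = weight t \<rho>"
  using assms(3-)
proof (induction t arbitrary: q \<rho>)
  case (Node s ts)
  define qs where "qs = map (\<lambda>i. the (\<rho> [i])) [0..<length ts]"
  have wf: "wf_tree Sig rk (ts ! i)" if "i < length ts" for i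
    using Node.prems(1) that by simp
  have child: "(\<lambda>w. \<rho> (i # w)) \<in> runs Q (qs ! i) (ts ! i)"
      "weight (ts ! i) (\<lambda>w. \<rho> (i # w)) \<noteq> zero" if "i < length ts" for i
    using runs_child[OF Node.prems(2) that] weight_Node_nonzeroD(1)[OF Node.prems(3) that] that
    by (simp_all add: qs_def)
  have "qs \<in> tuples Q (length ts)"
    using runs_root_in[OF child(1)] by (auto simp: qs_def tuples_def)
  then have "hv (Node s ts) q =
      mult (bprod mult one (map (\<lambda>i. hv (ts ! i) (qs ! i)) [0..<length ts])) (delta qs s q)"
    using hv_nonzero_imp_eq_root[OF assms(1,2) wf child]
    by (rule hv_Node_eq_single_summand[OF assms(1)])
  also have "map (\<lambda>i. hv (ts ! i) (qs ! i)) [0..<length ts]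
      = map (\<lambda>i. weight (ts ! i) (\<lambda>w. \<rho> (i # w))) [0..<length ts]"
    using Node.IH[OF nth_mem wf child] by simp
  also have "mult (bprod mult one \<dots>) (delta qs s q) = weight (Node s ts) \<rho>"
    using runs_root[OF Node.prems(2)] by (simp add: weight_Node qs_def)
  finally show ?case .
qed

lemma hV_nz_eq_R_nz:
  assumes "finite Q" "bu_deterministic Sig rk zero Q delta" "wf_tree Sig rk t"
  shows "hV_nz add mult zero one Q delta t = R_nz add mult zero one Q delta t"
proof (intro set_eqI iffI)
  fix q
  assume "q \<in> hV_nz add mult zero one Q delta t"
  then have "q \<in> Q" "hv t q \<noteq> zero"
    by (simp_all add: hV_nz_def)
  moreover obtain \<rho> where "\<rho> \<in> runs Q q t" "weight t \<rho> \<noteq> zero"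
    using run_of_hv_nonzero[OF assms \<open>q \<in> Q\<close> \<open>hv t q \<noteq> zero\<close>] \<open>hv t q \<noteq> zero\<close> by auto
  ultimately show "q \<in> R_nz add mult zero one Q delta t"
    unfolding R_nz_def by blast
next
  fix q
  assume "q \<in> R_nz add mult zero one Q delta t"
  then show "q \<in> hV_nz add mult zero one Q delta t"
    using hv_eq_weight[OF assms] unfolding hV_nz_def R_nz_def by fastforce
qed

lemma R_nz_ex1_nonzero_run:
  assumes "bu_deterministic Sig rk zero Q delta" "wf_tree Sig rk t"
    and "q \<in> R_nz add mult zero one Q delta t"
  shows "\<exists>!\<rho>. \<rho> \<in> runs Q q t \<and> weight t \<rho> \<noteq> zero"
  using assms(3) nonzero_runs_unique[OF assms(1,2)] unfolding R_nz_def by blast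

lemma R_nz_empty_or_singleton:
  assumes "bu_deterministic Sig rk zero Q delta" "wf_tree Sig rk t"
  shows "R_nz add mult zero one Q delta t = {} \<or> (\<exists>q. R_nz add mult zero one Q delta t = {q})"
proof -
  have "p = q"
    if R_nz: "p \<in> R_nz add mult zero one Q delta t" "q \<in> R_nz add mult zero one Q delta t" for p q
  proof -
    obtain \<rho>\<^sub>p \<rho>\<^sub>q where "\<rho>\<^sub>p \<in> runs Q p t" "weight t \<rho>\<^sub>p \<noteq> zero"
      and "\<rho>\<^sub>q \<in> runs Q q t" "weight t \<rho>\<^sub>q \<noteq> zero"
      using R_nz unfolding R_nz_def by blast
    then have "\<rho>\<^sub>p \<in> runs Q q t"
      using nonzero_runs_unique[OF assms] by metis
    with \<open>\<rho>\<^sub>p \<in> runs Q p t\<close> show "p = q"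
      by (rule runs_root_unique)
  qed
  then show ?thesis
    by blast
qed

lemma bu_deterministic_nonzero_states:
  assumes "finite Q" "bu_deterministic Sig rk zero Q delta" "wf_tree Sig rk t"
  defines "H \<equiv> hV_nz add mult zero one Q delta t" and "R \<equiv> R_nz add mult zero one Q delta t"
  shows "card H \<le> 1 \<and> card R \<le> 1 \<and>
    (H = {} \<and> R = {} \<or>
     (\<exists>q\<in>Q. H = {q} \<and> R = {q} \<and> (\<exists>!\<rho>. \<rho> \<in> runs Q q t \<and> weight t \<rho> \<noteq> zero) \<and>
        (\<forall>\<rho>. \<rho> \<in> runs Q q t \<and> weight t \<rho> \<noteq> zero \<longrightarrow> hv t q = weight t \<rho>)))"
proof -
  have H_eq_R: "H = R"
    unfolding H_def R_def using assms(1-3) by (rule hV_nz_eq_R_nz)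
  from R_nz_empty_or_singleton[OF assms(2,3)] show ?thesis
  proof
    assume "R_nz add mult zero one Q delta t = {}"
    with H_eq_R show ?thesis
      by (simp add: R_def)
  next
    assume "\<exists>q. R_nz add mult zero one Q delta t = {q}"
    then obtain q where q: "R = {q}"
      unfolding R_def ..
    then have "q \<in> Q"
      unfolding R_def R_nz_def by blast
    with q H_eq_R show ?thesis
      using R_nz_ex1_nonzero_run[OF assms(2,3)] hv_eq_weight[OF assms(1-3)]
      by (simp add: R_def)
  qed
qed

end

theorem lemma3p5:
  fixes Sig :: "'f set" and rk :: "'f \<Rightarrow> nat"
    and add mult :: "'b \<Rightarrow> 'b \<Rightarrow> 'b" and zero one :: 'b
    and Q :: "'q set" and delta :: "'q list \<Rightarrow> 'f \<Rightarrow> 'q \<Rightarrow> 'b" and F :: "'q \<Rightarrow> 'b"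
    and s :: 'f and ts :: "'f tree list"
  assumes "ranked_alphabet Sig rk"
    and "strong_bimonoid add mult zero one"
    and "finite Q" and "Q \<noteq> {}"
    and "wf_tree Sig rk (Node s ts)"
  shows
    "((\<exists>i<length ts. hV_nz add mult zero one Q delta (ts ! i) = {})
        \<longrightarrow> hV_nz add mult zero one Q delta (Node s ts) = {})
     \<and> ((\<exists>i<length ts. R_nz add mult zero one Q delta (ts ! i) = {})
        \<longrightarrow> R_nz add mult zero one Q delta (Node s ts) = {})
     \<and> (bu_deterministic Sig rk zero Q delta \<longrightarrow>
          card (hV_nz add mult zero one Q delta (Node s ts)) \<le> 1
        \<and> card (R_nz add mult zero one Q delta (Node s ts)) \<le> 1
        \<and> ((hV_nz add mult zero one Q delta (Node s ts) = {}
             \<and> R_nz add mult zero one Q delta (Node s ts) = {})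
           \<or> (\<exists>q\<in>Q. hV_nz add mult zero one Q delta (Node s ts) = {q}
                   \<and> R_nz add mult zero one Q delta (Node s ts) = {q}
                   \<and> (\<exists>!rho. rho \<in> runs Q q (Node s ts)
                            \<and> wt add mult zero one delta (Node s ts) rho \<noteq> zero)
                   \<and> (\<forall>rho. rho \<in> runs Q q (Node s ts)
                            \<and> wt add mult zero one delta (Node s ts) rho \<noteq> zero
                            \<longrightarrow> hV add mult zero one Q delta (Node s ts) q
                                = wt add mult zero one delta (Node s ts) rho))))"
proof -
  interpret wta add mult zero one Q delta
    using assms(2) by unfold_locales
  show ?thesis
    using hV_nz_Node_eq_empty R_nz_Node_eq_empty bu_deterministic_nonzero_states[OF assms(3) _ assms(5)]
    by blast
qed

end
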